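(* Fix $\lambda\in[0,1]$. Suppose $(q_{i,j}^{(k)})_{i\ne j,\,k=\pm1}$ are real numbers with $q_{i,j}^{(k)}\in(0,1)$ for all indices, satisfying $$q_{i,j}^{(k)}=\lambda\Big[p_{i,j}^{(k)}+\sum_{m\neq i,j}p_{i,m}^{(k)}q_{m,j}^{(k)}+\sum_{m\neq i}p_{i,m}^{(-k)}q_{m,i}^{(-k)}q_{i,j}^{(k)}\Big]\quad\text{for all } i\ne j,\ k.$$ Then $q_{i,j}^{(k)}=R_{i,j}^{(k)}(\lambda)$ for all $i\neq j$, $k$.
   Context: Fix an integer $N\ge 3$. Let $\mathcal G_N$ be the groupoid with object set $\{1,\dots,N\}$ generated by arrows $A_{i,j}^{(k)}$, $i\neq j\in\{1,\dots,N\}$, $k\in\{-1,1\}$, with source $i$ and target $j$, subject to the relations $A_{i,j}^{(k)}A_{j,\ell}^{(k)}=A_{i,\ell}^{(k)}$ for all $i,j,\ell$, $k$, with the convention $A_{i,i}^{(k)}:=e_i$ (unit at object $i$). Let $\mathcal A$ be its arrow set. Let $\{W_n\}_{n\ge0}$ be the Markov chain on $\mathcal A$ with $P(W_{n+1}=y\mid W_n=x)=p_{i,j}^{(k)}$ if $x^{-1}y=A_{i,j}^{(k)}$ with $i\ne j$ and $0$ otherwise, where $p_{i,j}^{(k)}\in(0,1)$ and $\sum_{j\ne i}\sum_{k=\pm1}p_{i,j}^{(k)}=1$ for each $i$; $P_x,E_x$ denote law and expectation with $W_0=x$. For $x\in\mathcal A$ let $T(0,x)=\inf\{n\ge0:W_n=W_0x\}$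 (possibly $\infty$), and define $R_{i,j}^{(k)}(\lambda)=E_{e_i}[\lambda^{T(0,A_{i,j}^{(k)})}]=\sum_{n\ge0}P_{e_i}(T(0,A_{i,j}^{(k)})=n)\lambda^n$. *)

theory Defs
  imports Complex_Main
begin

text \<open>
  Concrete model of the groupoid G_N.  An arrow is represented by its reduced
  (normal form) word: a source object s together with a list of steps (k, v),
  meaning a factor A^{(k)}_{u,v} from the current object u to v.  In a reduced
  word consecutive labels k alternate and every step changes the object
  (v differs from the previous object).  Because of the relations
  A^{(k)}_{i,j} A^{(k)}_{j,l} = A^{(k)}_{i,l} (with A^{(k)}_{i,i} = e_i), every arrow
  has a unique such normal form.
\<close>

type_synonym arrow = "nat \<times> (int \<times> nat) list"

definition unit_arrow :: "nat \<Rightarrow> arrow" where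
  "unit_arrow i = (i, [])"

definition gen_arrow :: "nat \<Rightarrow> nat \<Rightarrow> int \<Rightarrow> arrow" where
  "gen_arrow i j k = (i, [(k, j)])"

definition tgt :: "arrow \<Rightarrow> nat" where
  "tgt x = (if snd x = [] then fst x else snd (last (snd x)))"

text \<open>Right multiplication of an arrow x (with target tgt x) by the generator
  A^{(k)}_{tgt x, j}, computed on normal forms.\<close>
definition rmul :: "arrow \<Rightarrow> int \<Rightarrow> nat \<Rightarrow> arrow" where
  "rmul x k j =
     (let s = fst x; ws = snd x in
      if ws = [] \<or> fst (last ws) \<noteq> k then (s, ws @ [(k, j)])
      else if tgt (s, butlast ws) = j then (s, butlast ws)
      else (s, butlast ws @ [(k, j)]))"

definition walk :: "arrow \<Rightarrow> (int \<times> nat) list \<Rightarrow> arrow" where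
  "walk x ss = foldl (\<lambda>y st. rmul y (fst st) (snd st)) x ss"

definition valid_steps :: "nat \<Rightarrow> arrow \<Rightarrow> nat \<Rightarrow> (int \<times> nat) list set" where
  "valid_steps N x n =
     {ss. length ss = n \<and>
          (\<forall>m<n. fst (ss ! m) \<in> {-1, 1} \<and> snd (ss ! m) \<in> {1..N} \<and>
                 snd (ss ! m) \<noteq> tgt (walk x (take m ss)))}"

definition path_prob :: "(nat \<Rightarrow> nat \<Rightarrow> int \<Rightarrow> real) \<Rightarrow> arrow \<Rightarrow> (int \<times> nat) list \<Rightarrow> real" where
  "path_prob p x ss =
     (\<Prod>m<length ss. p (tgt (walk x (take m ss))) (snd (ss ! m)) (fst (ss ! m)))"

definition first_hit_prob ::
  "nat \<Rightarrow> (nat \<Rightarrow> nat \<Rightarrow> int \<Rightarrow> real) \<Rightarrow> arrow \<Rightarrow> arrow \<Rightarrow> nat \<Rightarrow> real" where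
  "first_hit_prob N p x target n =
     (\<Sum>ss\<in>{ss \<in> valid_steps N x n. walk x ss = target \<and>
                                    (\<forall>m<n. walk x (take m ss) \<noteq> target)}.
        path_prob p x ss)"

text \<open>R^{(k)}_{i,j}(lambda) = E_{e_i}[lambda^{T(0, A^{(k)}_{i,j})}]
  = sum_n P_{e_i}(T(0,A^{(k)}_{i,j}) = n) lambda^n  (here W_0 = e_i, so W_0 A = A).\<close>
definition R_gf :: "nat \<Rightarrow> (nat \<Rightarrow> nat \<Rightarrow> int \<Rightarrow> real) \<Rightarrow> nat \<Rightarrow> nat \<Rightarrow> int \<Rightarrow> real \<Rightarrow> real" where
  "R_gf N p i j k lam =
     (\<Sum>n. first_hit_prob N p (unit_arrow i) (gen_arrow i j k) n * lam ^ n)"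

end

theory Submission
  imports Defs
begin

text \<open>
  Extend q from the generators to all arrows reachable from e_i: the weight of an arrow is the
  product of the q's needed to undo the factors of its reduced word until the target
  A^{(k)}_{i,j} is reached. The equation satisfied by q says precisely that this weight H is
  lambda-harmonic away from the target, so for every n
  H(e_i) = sum_{m<=n} P(T = m) lambda^m + E[lambda^n H(W_n); T > n].
  The residual expectation tends to 0 because of a uniform variance gap: from every arrow, a
  step whose label differs from that of the last factor (label -k from e_i) lengthens the
  reduced word and so multiplies H by some q <= c < 1, and such steps have probability at
  least d > 0. Hence (1 + kappa) H^2 <= E[(lambda H)^2 after one step], the second moments of
  the residual are summable, and the residual itself is dominated through b <= e + b^2/e.
\<close>

section \<open>Walks and the first-passage decomposition\<close>

lemma tgt_rmul [simp]: "tgt (rmul x k j) = j"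
  by (auto simp: rmul_def Let_def tgt_def)

lemma walk_Nil [simp]: "walk x [] = x"
  by (simp add: walk_def)

lemma walk_snoc [simp]: "walk x (ss @ [st]) = rmul (walk x ss) (fst st) (snd st)"
  by (simp add: walk_def)

lemma valid_steps_0 [simp]: "valid_steps N x 0 = {[]}"
  by (auto simp: valid_steps_def)

lemma length_valid_steps: "ss \<in> valid_steps N x n \<Longrightarrow> length ss = n"
  by (simp add: valid_steps_def)

lemma snoc_in_valid_steps_iff:
  "ss @ [st] \<in> valid_steps N x (Suc n) \<longleftrightarrow>
     ss \<in> valid_steps N x n \<and> fst st \<in> {-1, 1} \<and> snd st \<in> {1..N} \<and>
     snd st \<noteq> tgt (walk x ss)"
  unfolding valid_steps_def by (auto simp: nth_append less_Suc_eq all_conj_distrib)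

lemma valid_steps_Suc:
  "valid_steps N x (Suc n) =
     (\<lambda>(ss, st). ss @ [st]) `
       (SIGMA ss:valid_steps N x n. {-1, 1} \<times> ({1..N} - {tgt (walk x ss)}))"
    (is "_ = ?R")
proof (intro equalityI subsetI)
  fix ss assume ss: "ss \<in> valid_steps N x (Suc n)"
  then have "ss \<noteq> []" by (auto dest: length_valid_steps)
  then obtain ss' st where "ss = ss' @ [st]" by (cases ss rule: rev_cases) auto
  with ss show "ss \<in> ?R"
    by (auto simp: snoc_in_valid_steps_iff image_iff mem_Times_iff)
qed (auto simp: snoc_in_valid_steps_iff mem_Times_iff)

lemma valid_steps_SucE:
  assumes "ss \<in> valid_steps N x (Suc n)"
  obtains ss' l v where "ss = ss' @ [(l, v)]" "ss' \<in> valid_steps N x n"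
    "l \<in> {-1, 1}" "v \<in> {1..N}" "v \<noteq> tgt (walk x ss')"
proof -
  from assms obtain ss' st where "ss = ss' @ [st]" "ss' \<in> valid_steps N x n"
    "st \<in> {-1, 1} \<times> ({1..N} - {tgt (walk x ss')})"
    unfolding valid_steps_Suc by auto
  then show thesis by (intro that[of ss' "fst st" "snd st"]) auto
qed

lemma finite_valid_steps: "finite (valid_steps N x n)"
  by (induction n) (auto simp: valid_steps_Suc)

lemma sum_valid_steps_Suc:
  "(\<Sum>ss\<in>valid_steps N x (Suc n). g ss) =
     (\<Sum>ss\<in>valid_steps N x n. \<Sum>l\<in>{-1, 1}. \<Sum>v\<in>{1..N} - {tgt (walk x ss)}. g (ss @ [(l, v)]))"
proof -
  have "inj_on (\<lambda>(ss, st). ss @ [st])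
          (SIGMA ss:valid_steps N x n. {-1, 1} \<times> ({1..N} - {tgt (walk x ss)}))"
    by (auto simp: inj_on_def)
  then show ?thesis
    by (simp add: valid_steps_Suc sum.reindex sum.Sigma finite_valid_steps sum.cartesian_product
        split_def)
qed

lemma path_prob_Nil [simp]: "path_prob p x [] = 1"
  by (simp add: path_prob_def)

lemma path_prob_snoc:
  "path_prob p x (ss @ [(l, v)]) = path_prob p x ss * p (tgt (walk x ss)) v l"
  unfolding path_prob_def by (simp add: nth_append)

definition step_mean ::
  "nat \<Rightarrow> (nat \<Rightarrow> nat \<Rightarrow> int \<Rightarrow> real) \<Rightarrow> (arrow \<Rightarrow> real) \<Rightarrow> arrow \<Rightarrow> real" where
  "step_mean N p G z = (\<Sum>l\<in>{-1, 1}. \<Sum>v\<in>{1..N} - {tgt z}. p (tgt z) v l * G (rmul z l v))"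

lemma step_mean_scale: "step_mean N p (\<lambda>z. c * G z) w = c * step_mean N p G w"
  unfolding step_mean_def sum_distrib_left by (simp add: mult_ac)

lemma sum_sign_split: "l \<in> {-1, 1::int} \<Longrightarrow> (\<Sum>l'\<in>{-1, 1}. g l') = g l + g (-l)"
  by (auto simp: add.commute)

lemma slice_le_step_mean:
  assumes "l \<in> {-1, 1}"
    and "\<And>v. v \<in> {1..N} - {tgt z} \<Longrightarrow> 0 \<le> p (tgt z) v (-l) * G (rmul z (-l) v)"
  shows "(\<Sum>v\<in>{1..N} - {tgt z}. p (tgt z) v l * G (rmul z l v)) \<le> step_mean N p G z"
proof -
  have "0 \<le> (\<Sum>v\<in>{1..N} - {tgt z}. p (tgt z) v (-l) * G (rmul z (-l) v))"
    using assms(2) by (rule sum_nonneg)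
  then show ?thesis unfolding step_mean_def sum_sign_split[OF assms(1)] by simp
qed

lemma step_mean_one:
  assumes "(\<Sum>b\<in>{1..N} - {tgt z}. \<Sum>l\<in>{-1, 1}. p (tgt z) b l) = 1"
  shows "step_mean N p (\<lambda>_. 1) z = 1"
  unfolding step_mean_def using assms by (subst sum.swap) simp

lemma weighted_second_moment:
  fixes w Z :: "'a \<Rightarrow> real"
  assumes "(\<Sum>i\<in>I. w i) = 1" and "(\<Sum>i\<in>I. w i * Z i) = h"
  shows "(\<Sum>i\<in>I. w i * (Z i)\<^sup>2) = h\<^sup>2 + (\<Sum>i\<in>I. w i * (Z i - h)\<^sup>2)"
proof -
  have "(\<Sum>i\<in>I. w i * (Z i - h)\<^sup>2) =
      (\<Sum>i\<in>I. w i * (Z i)\<^sup>2) - 2 * h * (\<Sum>i\<in>I. w i * Z i) + h\<^sup>2 * (\<Sum>i\<in>I. w i)"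
    by (simp add: power2_eq_square algebra_simps sum.distrib sum_subtractf sum_distrib_left)
  with assms show ?thesis by (simp add: power2_eq_square)
qed

lemma step_mean_second_moment:
  assumes "step_mean N p (\<lambda>_. 1) z = 1" and "step_mean N p G z = h"
  shows "step_mean N p (\<lambda>w. (G w)\<^sup>2) z = h\<^sup>2 + step_mean N p (\<lambda>w. (G w - h)\<^sup>2) z"
proof -
  have as_sum: "step_mean N p F z =
      (\<Sum>s\<in>{-1, 1} \<times> ({1..N} - {tgt z}).
         p (tgt z) (snd s) (fst s) * F (rmul z (fst s) (snd s)))" for F
    unfolding step_mean_def sum.cartesian_product by (simp add: split_def)
  show ?thesis
    using assms unfolding as_sum by (intro weighted_second_moment) simp_all
qed

definition avoids :: "arrow \<Rightarrow> arrow \<Rightarrow> (int \<times> nat) list \<Rightarrow> bool" where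
  "avoids x y ss \<longleftrightarrow> (\<forall>m\<le>length ss. walk x (take m ss) \<noteq> y)"

definition killed_mean ::
  "nat \<Rightarrow> (nat \<Rightarrow> nat \<Rightarrow> int \<Rightarrow> real) \<Rightarrow> arrow \<Rightarrow> arrow \<Rightarrow> (arrow \<Rightarrow> real) \<Rightarrow> nat \<Rightarrow> real"
  where
  "killed_mean N p x y G n =
     (\<Sum>ss\<in>valid_steps N x n. if avoids x y ss then path_prob p x ss * G (walk x ss) else 0)"

lemma avoids_Nil [simp]: "avoids x y [] \<longleftrightarrow> x \<noteq> y"
  by (simp add: avoids_def)

lemma avoids_snoc: "avoids x y (ss @ [st]) \<longleftrightarrow> avoids x y ss \<and> walk x (ss @ [st]) \<noteq> y"
  by (auto simp: avoids_def le_Suc_eq)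

lemma avoids_imp_walk_neq: "avoids x y ss \<Longrightarrow> walk x ss \<noteq> y"
  by (auto simp: avoids_def)

lemma first_hit_prob_0: "x \<noteq> y \<Longrightarrow> first_hit_prob N p x y 0 = 0"
  by (simp add: first_hit_prob_def)

lemma killed_mean_0: "x \<noteq> y \<Longrightarrow> killed_mean N p x y G 0 = G x"
  by (simp add: killed_mean_def)

lemma first_hit_prob_Suc:
  "first_hit_prob N p x y (Suc n) =
     (\<Sum>ss\<in>valid_steps N x n. \<Sum>l\<in>{-1, 1}. \<Sum>v\<in>{1..N} - {tgt (walk x ss)}.
        if rmul (walk x ss) l v = y \<and> avoids x y ss
        then path_prob p x ss * p (tgt (walk x ss)) v l else 0)"
proof -
  have "(\<forall>m<Suc n. walk x (take m (ss @ [st])) \<noteq> y) \<longleftrightarrow> avoids x y ss"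
    if "ss \<in> valid_steps N x n" for ss st
    using length_valid_steps[OF that] by (auto simp: avoids_def less_Suc_eq_le)
  then show ?thesis
    unfolding first_hit_prob_def
    by (simp add: sum.inter_filter finite_valid_steps sum_valid_steps_Suc path_prob_snoc
        cong: sum.cong if_cong)
qed

lemma killed_mean_Suc:
  "killed_mean N p x y G (Suc n) =
     (\<Sum>ss\<in>valid_steps N x n. \<Sum>l\<in>{-1, 1}. \<Sum>v\<in>{1..N} - {tgt (walk x ss)}.
        if avoids x y ss \<and> rmul (walk x ss) l v \<noteq> y
        then path_prob p x ss * p (tgt (walk x ss)) v l * G (rmul (walk x ss) l v) else 0)"
  unfolding killed_mean_def
  by (simp add: sum_valid_steps_Suc path_prob_snoc avoids_snoc cong: if_cong)

lemma killed_mean_step_mean: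
  "killed_mean N p x y (step_mean N p G) n =
     killed_mean N p x y G (Suc n) + first_hit_prob N p x y (Suc n) * G y"
proof -
  have "killed_mean N p x y (step_mean N p G) n =
      (\<Sum>ss\<in>valid_steps N x n. \<Sum>l\<in>{-1, 1}. \<Sum>v\<in>{1..N} - {tgt (walk x ss)}.
        (if avoids x y ss \<and> rmul (walk x ss) l v \<noteq> y
         then path_prob p x ss * p (tgt (walk x ss)) v l * G (rmul (walk x ss) l v) else 0) +
        (if rmul (walk x ss) l v = y \<and> avoids x y ss
         then path_prob p x ss * p (tgt (walk x ss)) v l else 0) * G y)"
    unfolding killed_mean_def step_mean_def sum_distrib_left
    by (intro sum.cong refl) (auto simp del: sum.insert intro!: sum.cong split: if_split_asm)
  then show ?thesis
    unfolding killed_mean_Suc first_hit_prob_Suc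
    by (simp add: sum.distrib sum_distrib_right distrib_right)
qed

lemma killed_mean_scale: "killed_mean N p x y (\<lambda>z. c * G z) n = c * killed_mean N p x y G n"
  unfolding killed_mean_def sum_distrib_left by (intro sum.cong) auto

lemma killed_mean_add:
  "killed_mean N p x y (\<lambda>z. G z + G' z) n = killed_mean N p x y G n + killed_mean N p x y G' n"
  unfolding killed_mean_def sum.distrib[symmetric] by (intro sum.cong) (auto simp: distrib_left)

section \<open>Bounded harmonic functions with a variance gap\<close>

locale harmonic_with_gap =
  fixes N :: nat and p :: "nat \<Rightarrow> nat \<Rightarrow> int \<Rightarrow> real" and lam :: real
    and D :: "arrow set" and y :: arrow and H :: "arrow \<Rightarrow> real" and kappa :: real
  assumes p_nonneg: "\<And>a b l. a \<in> {1..N} \<Longrightarrow> b \<in> {1..N} \<Longrightarrow> a \<noteq> b \<Longrightarrow> l \<in> {-1, 1} \<Longrightarrow>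
                       0 \<le> p a b l"
    and lam: "0 \<le> lam" "lam \<le> 1"
    and tgt_in_D: "\<And>z. z \<in> D \<Longrightarrow> tgt z \<in> {1..N}"
    and rmul_in_D: "\<And>z l v. z \<in> D \<Longrightarrow> l \<in> {-1, 1} \<Longrightarrow> v \<in> {1..N} \<Longrightarrow> v \<noteq> tgt z \<Longrightarrow>
                      rmul z l v \<in> D"
    and step_mean_one_on_D: "\<And>z. z \<in> D \<Longrightarrow> step_mean N p (\<lambda>_. 1) z = 1"
    and H_nonneg: "\<And>z. z \<in> D \<Longrightarrow> 0 \<le> H z"
    and H_le_1: "\<And>z. z \<in> D \<Longrightarrow> H z \<le> 1"
    and H_target: "H y = 1"
    and harmonic: "\<And>z. z \<in> D \<Longrightarrow> z \<noteq> y \<Longrightarrow> lam * step_mean N p H z = H z"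
    and kappa_pos: "0 < kappa"
    and variance_gap: "\<And>z. z \<in> D \<Longrightarrow> z \<noteq> y \<Longrightarrow>
                         (1 + kappa) * (H z)\<^sup>2 \<le> step_mean N p (\<lambda>w. (lam * H w)\<^sup>2) z"
begin

lemma walk_in_D: "x \<in> D \<Longrightarrow> ss \<in> valid_steps N x n \<Longrightarrow> walk x ss \<in> D"
proof (induction n arbitrary: ss)
  case (Suc n)
  from Suc.prems(2) show ?case
    by (rule valid_steps_SucE) (use Suc rmul_in_D in auto)
qed simp

lemma path_prob_nonneg: "x \<in> D \<Longrightarrow> ss \<in> valid_steps N x n \<Longrightarrow> 0 \<le> path_prob p x ss"
proof (induction n arbitrary: ss)
  case (Suc n)
  from Suc.prems(2) show ?case
  proof (rule valid_steps_SucE)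
    fix ss' l v assume "ss = ss' @ [(l, v)]" "ss' \<in> valid_steps N x n"
      "l \<in> {-1, 1}" "v \<in> {1..N}" "v \<noteq> tgt (walk x ss')"
    with Suc tgt_in_D[OF walk_in_D] show ?thesis
      by (simp add: path_prob_snoc p_nonneg)
  qed
qed simp

lemma killed_mean_mono:
  assumes "x \<in> D" and "\<And>z. z \<in> D \<Longrightarrow> z \<noteq> y \<Longrightarrow> G z \<le> G' z"
  shows "killed_mean N p x y G n \<le> killed_mean N p x y G' n"
  unfolding killed_mean_def
  using assms walk_in_D path_prob_nonneg avoids_imp_walk_neq
  by (intro sum_mono) (simp add: mult_left_mono)

lemma killed_mean_cong:
  assumes "x \<in> D" and "\<And>z. z \<in> D \<Longrightarrow> z \<noteq> y \<Longrightarrow> G z = G' z"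
  shows "killed_mean N p x y G n = killed_mean N p x y G' n"
  using assms by (intro antisym killed_mean_mono) auto

lemma killed_mean_nonneg:
  assumes "x \<in> D" and "\<And>z. z \<in> D \<Longrightarrow> 0 \<le> G z"
  shows "0 \<le> killed_mean N p x y G n"
  unfolding killed_mean_def by (intro sum_nonneg) (simp add: assms walk_in_D path_prob_nonneg)

lemma first_hit_prob_nonneg: "x \<in> D \<Longrightarrow> 0 \<le> first_hit_prob N p x y n"
  unfolding first_hit_prob_def by (auto intro!: sum_nonneg path_prob_nonneg)

lemma lam_power_H_bounds: "z \<in> D \<Longrightarrow> 0 \<le> lam ^ n * H z \<and> lam ^ n * H z \<le> 1"
  using lam H_nonneg H_le_1 by (simp add: mult_le_one power_le_one)

context
  fixes x assumes x_in_D: "x \<in> D" and x_neq_y: "x \<noteq> y"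
begin

abbreviation residual :: "nat \<Rightarrow> real" where
  "residual n \<equiv> killed_mean N p x y (\<lambda>z. lam ^ n * H z) n"

abbreviation residual_sq :: "nat \<Rightarrow> real" where
  "residual_sq n \<equiv> killed_mean N p x y (\<lambda>z. (lam ^ n * H z)\<^sup>2) n"

abbreviation survival :: "nat \<Rightarrow> real" where
  "survival n \<equiv> killed_mean N p x y (\<lambda>_. 1) n"

lemma residual_Suc:
  "residual n = residual (Suc n) + first_hit_prob N p x y (Suc n) * lam ^ Suc n"
proof -
  have "residual n = killed_mean N p x y (step_mean N p (\<lambda>z. lam ^ Suc n * H z)) n"
    using x_in_D harmonic by (intro killed_mean_cong) (simp_all add: step_mean_scale)
  then show ?thesis by (simp add: killed_mean_step_mean H_target)
qed

lemma residual_sq_Suc: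
  "(1 + kappa) * residual_sq n \<le>
     residual_sq (Suc n) + first_hit_prob N p x y (Suc n) * (lam ^ Suc n)\<^sup>2"
proof -
  have "(1 + kappa) * residual_sq n =
      killed_mean N p x y (\<lambda>z. (lam ^ n)\<^sup>2 * ((1 + kappa) * (H z)\<^sup>2)) n"
    by (simp add: killed_mean_scale[symmetric] power_mult_distrib mult_ac)
  also have "\<dots> \<le> killed_mean N p x y (\<lambda>z. (lam ^ n)\<^sup>2 * step_mean N p (\<lambda>w. (lam * H w)\<^sup>2) z) n"
    using x_in_D variance_gap by (intro killed_mean_mono mult_left_mono) simp_all
  also have "\<dots> = killed_mean N p x y (step_mean N p (\<lambda>z. (lam ^ Suc n * H z)\<^sup>2)) n"
    by (simp add: step_mean_scale[symmetric] power_mult_distrib mult_ac)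
  finally show ?thesis by (simp add: killed_mean_step_mean H_target)
qed

lemma survival_le_1: "survival n \<le> 1"
proof (induction n)
  case (Suc n)
  have "survival n = killed_mean N p x y (step_mean N p (\<lambda>_. 1)) n"
    using x_in_D by (intro killed_mean_cong) (simp_all add: step_mean_one_on_D)
  then show ?case
    using Suc first_hit_prob_nonneg[OF x_in_D, of "Suc n"] by (simp add: killed_mean_step_mean)
qed (simp add: killed_mean_0 x_neq_y)

lemma H_eq_partial_sum_plus_residual:
  "H x = (\<Sum>m\<le>n. first_hit_prob N p x y m * lam ^ m) + residual n"
proof (induction n)
  case 0
  then show ?case by (simp add: killed_mean_0 first_hit_prob_0 x_neq_y)
next
  case (Suc n)
  then show ?case using residual_Suc[of n] by simp
qed

lemma residual_nonneg: "0 \<le> residual n"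
  using x_in_D lam_power_H_bounds by (intro killed_mean_nonneg) auto

lemma residual_sq_nonneg: "0 \<le> residual_sq n"
  using x_in_D by (intro killed_mean_nonneg) auto

lemma partial_sum_le_1: "(\<Sum>m\<le>n. first_hit_prob N p x y m * lam ^ m) \<le> 1"
  using H_eq_partial_sum_plus_residual[of n] residual_nonneg[of n] H_le_1[OF x_in_D] by linarith

lemma residual_le_1: "residual n \<le> 1"
proof -
  have "0 \<le> (\<Sum>m\<le>n. first_hit_prob N p x y m * lam ^ m)"
    using first_hit_prob_nonneg[OF x_in_D] lam by (intro sum_nonneg) simp
  then show ?thesis using H_eq_partial_sum_plus_residual[of n] H_le_1[OF x_in_D] by linarith
qed

lemma residual_sq_le_residual: "residual_sq n \<le> residual n"
  using x_in_D lam_power_H_bounds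
  by (intro killed_mean_mono) (simp_all add: power2_eq_square mult_left_le_one_le)

lemma kappa_sum_residual_sq_le:
  "kappa * (\<Sum>m<n. residual_sq m) \<le>
     residual_sq n + (\<Sum>m\<le>n. first_hit_prob N p x y m * (lam ^ m)\<^sup>2)"
proof (induction n)
  case 0
  then show ?case using residual_sq_nonneg[of 0] by (simp add: first_hit_prob_0 x_neq_y)
next
  case (Suc n)
  then show ?case using residual_sq_Suc[of n] by (simp add: algebra_simps)
qed

lemma summable_residual_sq: "summable residual_sq"
proof (rule summableI_nonneg_bounded)
  fix n
  have "(\<Sum>m\<le>n. first_hit_prob N p x y m * (lam ^ m)\<^sup>2) \<le>
      (\<Sum>m\<le>n. first_hit_prob N p x y m * lam ^ m)"
    using first_hit_prob_nonneg[OF x_in_D] lam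
    by (intro sum_mono mult_left_mono)
       (simp_all add: power2_eq_square mult_left_le_one_le power_le_one)
  then have "kappa * (\<Sum>m<n. residual_sq m) \<le> 2"
    using kappa_sum_residual_sq_le[of n] partial_sum_le_1[of n]
      residual_sq_le_residual[of n] residual_le_1[of n] by linarith
  then show "(\<Sum>m<n. residual_sq m) \<le> 2 / kappa"
    using kappa_pos by (simp add: field_simps)
qed (rule residual_sq_nonneg)

lemma residual_le: "0 < e \<Longrightarrow> residual n \<le> e + residual_sq n / e"
proof -
  assume e: "0 < e"
  have "b \<le> e * 1 + 1 / e * b\<^sup>2" if "0 \<le> b" for b :: real
  proof -
    have "0 \<le> b * e" "0 \<le> (b - e) * (b - e)"
      using that e by simp_all
    then have "b * e \<le> e * e + b * b"
      by (simp add: algebra_simps)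
    with e show ?thesis by (simp add: field_simps power2_eq_square)
  qed
  then have "residual n \<le> killed_mean N p x y (\<lambda>z. e * 1 + 1 / e * (lam ^ n * H z)\<^sup>2) n"
    using x_in_D lam_power_H_bounds by (intro killed_mean_mono) simp_all
  also have "\<dots> = e * survival n + residual_sq n / e"
    unfolding killed_mean_add killed_mean_scale by simp
  also have "\<dots> \<le> e + residual_sq n / e"
    using e survival_le_1[of n] by simp
  finally show ?thesis .
qed

lemma residual_tendsto_0: "residual \<longlonglongrightarrow> 0"
proof (rule order_tendstoI)
  show "\<forall>\<^sub>F n in sequentially. a < residual n" if "a < 0" for a
    using that residual_nonneg by (simp add: less_le_trans)
  show "\<forall>\<^sub>F n in sequentially. residual n < a" if a: "0 < a" for a
  proof -
    have "\<forall>\<^sub>F n in sequentially. residual_sq n < (a / 2)\<^sup>2"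
      using summable_LIMSEQ_zero[OF summable_residual_sq] a by (intro order_tendstoD(2)) auto
    then show ?thesis
    proof eventually_elim
      case (elim n)
      then have "residual_sq n / (a / 2) < a / 2"
        using a by (simp add: field_simps power2_eq_square)
      then show ?case using residual_le[of "a / 2" n] a by linarith
    qed
  qed
qed

theorem first_hit_generating_function_sums:
  "(\<lambda>n. first_hit_prob N p x y n * lam ^ n) sums H x"
proof -
  have "(\<lambda>n. H x - residual n) \<longlonglongrightarrow> H x - 0"
    by (intro tendsto_diff tendsto_const residual_tendsto_0)
  moreover have "(\<Sum>m\<le>n. first_hit_prob N p x y m * lam ^ m) = H x - residual n" for n
    using H_eq_partial_sum_plus_residual[of n] by simp
  ultimately show ?thesis
    unfolding sums_def_le by simp
qed

end

end

section \<open>The weight function defined by a solution q\<close>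

text \<open>Reduced words are stored backwards, last factor first.\<close>

fun reduced_rev :: "nat \<Rightarrow> nat \<Rightarrow> (int \<times> nat) list \<Rightarrow> bool" where
  "reduced_rev N i [] \<longleftrightarrow> True"
| "reduced_rev N i [(l, v)] \<longleftrightarrow> l \<in> {-1, 1} \<and> v \<in> {1..N} \<and> v \<noteq> i"
| "reduced_rev N i ((l, v) # (l', v') # r) \<longleftrightarrow>
     l \<in> {-1, 1} \<and> v \<in> {1..N} \<and> v \<noteq> v' \<and> l \<noteq> l' \<and> reduced_rev N i ((l', v') # r)"

definition reduced_arrows :: "nat \<Rightarrow> nat \<Rightarrow> arrow set" where
  "reduced_arrows N i = {x. fst x = i \<and> reduced_rev N i (rev (snd x))}"

lemma reduced_rev_ConsD: "reduced_rev N i ((l, v) # r) \<Longrightarrow> l \<in> {-1, 1} \<and> v \<in> {1..N}"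
  by (cases r) auto

lemma reduced_arrowsE:
  assumes "x \<in> reduced_arrows N i"
  obtains rw where "x = (i, rev rw)" "reduced_rev N i rw"
  using assms that[of "rev (snd x)"] by (cases x) (simp add: reduced_arrows_def)

lemma tgt_in_reduced_arrows:
  assumes "i \<in> {1..N}" and "x \<in> reduced_arrows N i"
  shows "tgt x \<in> {1..N}"
proof -
  obtain rw where "x = (i, rev rw)" "reduced_rev N i rw"
    using assms(2) by (rule reduced_arrowsE)
  with assms(1) show ?thesis
    by (cases "(N, i, rw)" rule: reduced_rev.cases) (auto simp: tgt_def)
qed

lemma rmul_in_reduced_arrows:
  assumes "x \<in> reduced_arrows N i" and "l \<in> {-1, 1}" "v \<in> {1..N}" "v \<noteq> tgt x"
  shows "rmul x l v \<in> reduced_arrows N i"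
proof -
  obtain rw where "x = (i, rev rw)" "reduced_rev N i rw"
    using assms(1) by (rule reduced_arrowsE)
  with assms(2-) show ?thesis
    by (cases "(N, i, rw)" rule: reduced_rev.cases)
       (auto simp: reduced_arrows_def rmul_def Let_def tgt_def butlast_append)
qed

text \<open>
  Undoing a last factor A^{(l)}_{v',v} costs q v v' l. A single remaining factor A^{(l)}_{i,v}
  is either completed to A^{(k)}_{i,j} through A^{(k)}_{v,j} (if l = k) or undone before
  going to A^{(k)}_{i,j} directly.
\<close>

fun undo_weight ::
  "(nat \<Rightarrow> nat \<Rightarrow> int \<Rightarrow> real) \<Rightarrow> nat \<Rightarrow> nat \<Rightarrow> int \<Rightarrow> (int \<times> nat) list \<Rightarrow> real"
  where
  "undo_weight q i j k [] = q i j k"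
| "undo_weight q i j k [(l, v)] =
     (if l = k then (if v = j then 1 else q v j k) else q v i l * q i j k)"
| "undo_weight q i j k ((l, v) # (l', v') # r) = q v v' l * undo_weight q i j k ((l', v') # r)"

definition hit_weight ::
  "(nat \<Rightarrow> nat \<Rightarrow> int \<Rightarrow> real) \<Rightarrow> nat \<Rightarrow> nat \<Rightarrow> int \<Rightarrow> arrow \<Rightarrow> real" where
  "hit_weight q i j k x = undo_weight q i j k (rev (snd x))"

text \<open>
  For a word of length at least two ending in A^{(l)}_{b,a}, the witnesses are this l and b
  and the weight T of the word without its last factor. For shorter words
  (b, l, T) = (j, k, 1) if x is e_i or a single factor of label k, and
  (b, l, T) = (i, l, q i j k) if x is a single factor of another label l.
\<close>

lemma hit_weight_local_form:
  assumes ijk: "i \<in> {1..N}" "j \<in> {1..N}" "i \<noteq> j" "k \<in> {-1, 1}"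
    and x: "x \<in> reduced_arrows N i" "x \<noteq> gen_arrow i j k"
  obtains b l T where "b \<in> {1..N}" "b \<noteq> tgt x" "l \<in> {-1, 1}"
    "hit_weight q i j k x = q (tgt x) b l * T"
    "\<And>v. hit_weight q i j k (rmul x l v) = (if v = b then 1 else q v b l) * T"
    "\<And>v. hit_weight q i j k (rmul x (-l) v) = q v (tgt x) (-l) * hit_weight q i j k x"
proof -
  obtain rw where x_rw: "x = (i, rev rw)" and rw: "reduced_rev N i rw"
    using x(1) by (rule reduced_arrowsE)
  show thesis
  proof (cases "(N, i, rw)" rule: reduced_rev.cases)
    case 1
    with ijk x_rw show thesis
      by (intro that[of j k 1]) (auto simp: hit_weight_def rmul_def tgt_def)
  next
    case (2 _ _ l0 v0)
    show thesis
    proof (cases "l0 = k")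
      case True
      with 2 ijk x x_rw rw show thesis
        by (intro that[of j k 1])
           (auto simp: hit_weight_def rmul_def Let_def tgt_def gen_arrow_def)
    next
      case False
      with 2 ijk x_rw rw show thesis
        by (intro that[of i l0 "q i j k"]) (auto simp: hit_weight_def rmul_def Let_def tgt_def)
    qed
  next
    case (3 _ _ l0 v0 l1 v1 r)
    with x_rw rw reduced_rev_ConsD[of N i l1 v1 r] show thesis
      by (intro that[of v1 l0 "undo_weight q i j k ((l1, v1) # r)"])
         (auto simp: hit_weight_def rmul_def Let_def tgt_def butlast_append)
  qed
qed

lemma scaled_deviation_lower_bound:
  fixes lam r c h :: real
  assumes "0 \<le> lam" "lam \<le> 1" "0 \<le> r" "r \<le> c" "c \<le> 1" "0 \<le> h"
  shows "((1 - c) * h)\<^sup>2 \<le> (lam * r * h - h)\<^sup>2"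
proof -
  have "lam * r \<le> c" using assms by (metis mult_left_le_one_le order_trans)
  then have "lam * r * h \<le> c * h" using assms(6) by (rule mult_right_mono)
  then have "(1 - c) * h \<le> h - lam * r * h" by (simp add: algebra_simps)
  with assms show ?thesis by (subst power2_commute) (intro power_mono, simp_all)
qed

lemma finite_uniform_strict_bound:
  fixes f :: "'a \<Rightarrow> real"
  assumes "finite A" and "\<And>a. a \<in> A \<Longrightarrow> f a < b"
  obtains c where "c < b" and "\<And>a. a \<in> A \<Longrightarrow> f a \<le> c"
proof (cases "A = {}")
  case True
  then show thesis by (intro that[of "b - 1"]) auto
next
  case False
  with assms show thesis by (intro that[of "Max (f ` A)"]) auto
qed

locale q_solution =
  fixes N :: nat and p q :: "nat \<Rightarrow> nat \<Rightarrow> int \<Rightarrow> real" and lam :: real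
  assumes N3: "N \<ge> 3"
    and p_pos: "\<And>i j k. i \<in> {1..N} \<Longrightarrow> j \<in> {1..N} \<Longrightarrow> i \<noteq> j \<Longrightarrow> k \<in> {-1, 1} \<Longrightarrow>
                  0 < p i j k \<and> p i j k < 1"
    and p_sum: "\<And>i. i \<in> {1..N} \<Longrightarrow> (\<Sum>j\<in>{1..N} - {i}. \<Sum>k\<in>{-1, 1}. p i j k) = 1"
    and lam: "0 \<le> lam" "lam \<le> 1"
    and q_pos: "\<And>i j k. i \<in> {1..N} \<Longrightarrow> j \<in> {1..N} \<Longrightarrow> i \<noteq> j \<Longrightarrow> k \<in> {-1, 1} \<Longrightarrow>
                  0 < q i j k \<and> q i j k < 1"
    and q_eq: "\<And>i j k. i \<in> {1..N} \<Longrightarrow> j \<in> {1..N} \<Longrightarrow> i \<noteq> j \<Longrightarrow> k \<in> {-1, 1} \<Longrightarrow>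
                  q i j k = lam * (p i j k
                     + (\<Sum>m\<in>{1..N} - {i, j}. p i m k * q m j k)
                     + (\<Sum>m\<in>{1..N} - {i}. p i m (-k) * q m i (-k) * q i j k))"
begin

lemma p_nonneg: "a \<in> {1..N} \<Longrightarrow> b \<in> {1..N} \<Longrightarrow> a \<noteq> b \<Longrightarrow> l \<in> {-1, 1} \<Longrightarrow> 0 \<le> p a b l"
  using p_pos by (simp add: less_imp_le)

lemma step_mean_one_at: "tgt z \<in> {1..N} \<Longrightarrow> step_mean N p (\<lambda>_. 1) z = 1"
  by (rule step_mean_one) (rule p_sum)

lemma q_eq_extended:
  assumes "a \<in> {1..N}" "b \<in> {1..N}" "a \<noteq> b" "l \<in> {-1, 1}"
  shows "q a b l = lam * ((\<Sum>v\<in>{1..N} - {a}. p a v l * (if v = b then 1 else q v b l))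
                          + (\<Sum>v\<in>{1..N} - {a}. p a v (-l) * q v a (-l)) * q a b l)"
proof -
  have "{1..N} - {a} - {b} = {1..N} - {a, b}" by auto
  with assms have "(\<Sum>v\<in>{1..N} - {a}. p a v l * (if v = b then 1 else q v b l)) =
      p a b l + (\<Sum>m\<in>{1..N} - {a, b}. p a m l * q m b l)"
    by (simp add: sum.remove[of _ b])
  with q_eq[OF assms] show ?thesis by (simp add: sum_distrib_right)
qed

lemma undo_weight_bounds:
  assumes ijk: "i \<in> {1..N}" "j \<in> {1..N}" "i \<noteq> j" "k \<in> {-1, 1}"
  shows "reduced_rev N i rw \<Longrightarrow> 0 < undo_weight q i j k rw \<and> undo_weight q i j k rw \<le> 1"
proof (induction rw rule: induct_list012)
  case 1
  then show ?case using q_pos[OF ijk] by simp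
next
  case (2 st)
  obtain l v where "st = (l, v)" by fastforce
  with 2 ijk q_pos[OF ijk] q_pos[of v j k] q_pos[of v i l] show ?case
    by (auto simp: mult_le_one)
next
  case (3 st st' r)
  obtain l v l' v' where "st = (l, v)" "st' = (l', v')" by fastforce
  with 3 q_pos[of v v' l] reduced_rev_ConsD[of N i l' v' r] show ?case
    by (auto simp: mult_le_one)
qed

lemma q_uniform_bound:
  obtains c where "c < 1"
    and "\<And>a b l. a \<in> {1..N} \<Longrightarrow> b \<in> {1..N} \<Longrightarrow> a \<noteq> b \<Longrightarrow> l \<in> {-1, 1} \<Longrightarrow> q a b l \<le> c"
proof -
  let ?A = "SIGMA a:{1..N}. ({1..N} - {a}) \<times> {-1, 1}"
  have "(\<lambda>(a, b, l). q a b l) z < 1" if z: "z \<in> ?A" for z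
  proof -
    obtain a b l where "z = (a, b, l)" "a \<in> {1..N}" "b \<in> {1..N} - {a}" "l \<in> {-1, 1}"
      using z by blast
    then show ?thesis using q_pos[of a b l] by auto
  qed
  then obtain c where "c < 1" and "\<And>z. z \<in> ?A \<Longrightarrow> (\<lambda>(a, b, l). q a b l) z \<le> c"
    by (rule finite_uniform_strict_bound[rotated]) auto
  then show thesis by (intro that[of c]) auto
qed

lemma row_sum_uniform_bound:
  obtains d where "0 < d"
    and "\<And>a l. a \<in> {1..N} \<Longrightarrow> l \<in> {-1, 1} \<Longrightarrow> d \<le> (\<Sum>v\<in>{1..N} - {a}. p a v l)"
proof -
  let ?f = "\<lambda>(a, l). - (\<Sum>v\<in>{1..N} - {a}. p a v l)"
  have "0 < (\<Sum>v\<in>{1..N} - {a}. p a v l)" if "a \<in> {1..N}" "l \<in> {-1, 1}" for a l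
  proof (rule sum_pos2)
    show "(if a = 1 then 2 else 1) \<in> {1..N} - {a}" using N3 by auto
  qed (use that N3 in \<open>auto intro: p_nonneg p_pos[THEN conjunct1]\<close>)
  then have "?f z < 0" if "z \<in> {1..N} \<times> {-1, 1}" for z
    using that by auto
  then obtain c where "c < 0" and "\<And>z. z \<in> {1..N} \<times> {-1, 1} \<Longrightarrow> ?f z \<le> c"
    by (rule finite_uniform_strict_bound[rotated]) auto
  then show thesis by (intro that[of "- c"]) force+
qed

context
  fixes i j :: nat and k :: int
  assumes ijk: "i \<in> {1..N}" "j \<in> {1..N}" "i \<noteq> j" "k \<in> {-1, 1}"
begin

lemma hit_weight_bounds:
  "x \<in> reduced_arrows N i \<Longrightarrow> 0 \<le> hit_weight q i j k x \<and> hit_weight q i j k x \<le> 1"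
  using undo_weight_bounds[OF ijk] by (fastforce elim: reduced_arrowsE simp: hit_weight_def)

lemma hit_weight_harmonic:
  assumes x: "x \<in> reduced_arrows N i" "x \<noteq> gen_arrow i j k"
  shows "lam * step_mean N p (hit_weight q i j k) x = hit_weight q i j k x"
proof -
  obtain b l T where b: "b \<in> {1..N}" "b \<noteq> tgt x" and l: "l \<in> {-1, 1}"
    and W: "hit_weight q i j k x = q (tgt x) b l * T"
    and W_l: "\<And>v. hit_weight q i j k (rmul x l v) = (if v = b then 1 else q v b l) * T"
    and W_minus_l:
      "\<And>v. hit_weight q i j k (rmul x (-l) v) = q v (tgt x) (-l) * hit_weight q i j k x"
    using hit_weight_local_form[OF ijk x, where q = q] by blast
  have a: "tgt x \<in> {1..N}" using tgt_in_reduced_arrows[OF ijk(1) x(1)] .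
  have "lam * step_mean N p (hit_weight q i j k) x =
      lam * ((\<Sum>v\<in>{1..N} - {tgt x}. p (tgt x) v l * (if v = b then 1 else q v b l))
             + (\<Sum>v\<in>{1..N} - {tgt x}. p (tgt x) v (-l) * q v (tgt x) (-l)) * q (tgt x) b l) * T"
    unfolding step_mean_def sum_sign_split[OF l] W_l W_minus_l W
    by (simp add: sum_distrib_left sum_distrib_right mult_ac distrib_left)
  also have "\<dots> = hit_weight q i j k x"
    using q_eq_extended[OF a b(1) b(2)[symmetric] l] W by simp
  finally show ?thesis .
qed

lemma hit_weight_variance_gap:
  assumes c: "c < 1"
      "\<And>a b l. a \<in> {1..N} \<Longrightarrow> b \<in> {1..N} \<Longrightarrow> a \<noteq> b \<Longrightarrow> l \<in> {-1, 1} \<Longrightarrow> q a b l \<le> c"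
    and d: "\<And>a l. a \<in> {1..N} \<Longrightarrow> l \<in> {-1, 1} \<Longrightarrow> d \<le> (\<Sum>v\<in>{1..N} - {a}. p a v l)"
    and x: "x \<in> reduced_arrows N i" "x \<noteq> gen_arrow i j k"
  shows "(1 + d * (1 - c)\<^sup>2) * (hit_weight q i j k x)\<^sup>2 \<le>
           step_mean N p (\<lambda>w. (lam * hit_weight q i j k w)\<^sup>2) x"
proof -
  obtain b l T where "b \<in> {1..N}" "b \<noteq> tgt x" and l: "l \<in> {-1, 1}"
    and "hit_weight q i j k x = q (tgt x) b l * T"
    and "\<And>v. hit_weight q i j k (rmul x l v) = (if v = b then 1 else q v b l) * T"
    and W_minus_l:
      "\<And>v. hit_weight q i j k (rmul x (-l) v) = q v (tgt x) (-l) * hit_weight q i j k x"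
    using hit_weight_local_form[OF ijk x, where q = q] by blast
  define a where "a = tgt x"
  define h where "h = hit_weight q i j k x"
  have a: "a \<in> {1..N}" using tgt_in_reduced_arrows[OF ijk(1) x(1)] by (simp add: a_def)
  have h: "0 \<le> h" using hit_weight_bounds[OF x(1)] by (simp add: h_def)
  have "step_mean N p (\<lambda>w. lam * hit_weight q i j k w) x = h"
    using hit_weight_harmonic[OF x] by (simp add: step_mean_scale h_def)
  with step_mean_one_at[OF a[unfolded a_def]]
  have second_moment: "step_mean N p (\<lambda>w. (lam * hit_weight q i j k w)\<^sup>2) x =
      h\<^sup>2 + step_mean N p (\<lambda>w. (lam * hit_weight q i j k w - h)\<^sup>2) x"
    by (rule step_mean_second_moment)
  have "d * ((1 - c) * h)\<^sup>2 \<le> (\<Sum>v\<in>{1..N} - {a}. p a v (-l)) * ((1 - c) * h)\<^sup>2"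
    using d[OF a, of "-l"] l by (intro mult_right_mono) auto
  also have "\<dots> \<le> (\<Sum>v\<in>{1..N} - {a}. p a v (-l) * (lam * q v a (-l) * h - h)\<^sup>2)"
    unfolding sum_distrib_right
  proof (intro sum_mono mult_left_mono scaled_deviation_lower_bound)
    fix v assume v: "v \<in> {1..N} - {a}"
    then show "0 \<le> p a v (-l)" using a l p_nonneg by auto
    show "0 \<le> q v a (-l)" "q v a (-l) \<le> c"
      using v a l q_pos[of v a "-l"] c(2)[of v a "-l"] by auto
  qed (use lam c(1) h in auto)
  also have "\<dots> = (\<Sum>v\<in>{1..N} - {a}.
      p a v (-l) * (lam * hit_weight q i j k (rmul x (-l) v) - h)\<^sup>2)"
    by (simp add: W_minus_l a_def h_def mult_ac)
  also have "\<dots> \<le> step_mean N p (\<lambda>w. (lam * hit_weight q i j k w - h)\<^sup>2) x"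
    unfolding a_def using a[unfolded a_def] l
    by (intro slice_le_step_mean l) (auto intro!: mult_nonneg_nonneg p_nonneg)
  finally have "d * (1 - c)\<^sup>2 * h\<^sup>2 \<le> step_mean N p (\<lambda>w. (lam * hit_weight q i j k w - h)\<^sup>2) x"
    by (simp add: power_mult_distrib mult_ac)
  then show ?thesis
    unfolding second_moment h_def[symmetric] by (simp add: distrib_right)
qed

lemma q_eq_R_gf: "q i j k = R_gf N p i j k lam"
proof -
  obtain c where c: "c < 1"
    "\<And>a b l. a \<in> {1..N} \<Longrightarrow> b \<in> {1..N} \<Longrightarrow> a \<noteq> b \<Longrightarrow> l \<in> {-1, 1} \<Longrightarrow> q a b l \<le> c"
    using q_uniform_bound by blast
  obtain d where d: "0 < d"
    "\<And>a l. a \<in> {1..N} \<Longrightarrow> l \<in> {-1, 1} \<Longrightarrow> d \<le> (\<Sum>v\<in>{1..N} - {a}. p a v l)"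
    using row_sum_uniform_bound by blast
  interpret harmonic_with_gap N p lam "reduced_arrows N i" "gen_arrow i j k" "hit_weight q i j k"
    "d * (1 - c)\<^sup>2"
  proof
    show "0 < d * (1 - c)\<^sup>2" using c(1) d(1) by simp
    show "hit_weight q i j k (gen_arrow i j k) = 1" by (simp add: hit_weight_def gen_arrow_def)
  qed (use p_nonneg lam tgt_in_reduced_arrows[OF ijk(1)] rmul_in_reduced_arrows
         step_mean_one_at hit_weight_bounds hit_weight_harmonic
         hit_weight_variance_gap[OF c d(2)] in auto)
  have "(\<lambda>n. first_hit_prob N p (unit_arrow i) (gen_arrow i j k) n * lam ^ n)
          sums hit_weight q i j k (unit_arrow i)"
    by (rule first_hit_generating_function_sums)
       (auto simp: unit_arrow_def gen_arrow_def reduced_arrows_def)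
  then show ?thesis by (simp add: R_gf_def sums_iff hit_weight_def unit_arrow_def)
qed

end

end

theorem proposition5p6:
  fixes N :: nat and p q :: "nat \<Rightarrow> nat \<Rightarrow> int \<Rightarrow> real" and lam :: real
  assumes N3: "N \<ge> 3"
    and p_pos: "\<And>i j k. i \<in> {1..N} \<Longrightarrow> j \<in> {1..N} \<Longrightarrow> i \<noteq> j \<Longrightarrow> k \<in> {-1, 1} \<Longrightarrow>
                  0 < p i j k \<and> p i j k < 1"
    and p_sum: "\<And>i. i \<in> {1..N} \<Longrightarrow> (\<Sum>j\<in>{1..N} - {i}. \<Sum>k\<in>{-1, 1}. p i j k) = 1"
    and lam: "0 \<le> lam" "lam \<le> 1"
    and q_pos: "\<And>i j k. i \<in> {1..N} \<Longrightarrow> j \<in> {1..N} \<Longrightarrow> i \<noteq> j \<Longrightarrow> k \<in> {-1, 1} \<Longrightarrow>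
                  0 < q i j k \<and> q i j k < 1"
    and q_eq: "\<And>i j k. i \<in> {1..N} \<Longrightarrow> j \<in> {1..N} \<Longrightarrow> i \<noteq> j \<Longrightarrow> k \<in> {-1, 1} \<Longrightarrow>
                  q i j k = lam * (p i j k
                     + (\<Sum>m\<in>{1..N} - {i, j}. p i m k * q m j k)
                     + (\<Sum>m\<in>{1..N} - {i}. p i m (-k) * q m i (-k) * q i j k))"
  shows "\<forall>i\<in>{1..N}. \<forall>j\<in>{1..N}. \<forall>k\<in>{-1, 1::int}. i \<noteq> j \<longrightarrow> q i j k = R_gf N p i j k lam"
proof -
  interpret q_solution N p q lam
    using assms by unfold_locales
  show ?thesis using q_eq_R_gf by blast
qed

end
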